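(* Let $R$ be a commutative Noetherian ring and $n$ a non-negative integer. Let $0\to M'\to M\to M''\to 0$ be an exact sequence of $R$-modules. Then $M$ is in dimension $<n$ if and only if both $M'$ and $M''$ are in dimension $<n$.
   Context: For an $R$-module $L$, $\dim\operatorname{Supp}L=\sup\{\dim R/\mathfrak p:\mathfrak p\in\operatorname{Supp}L\}$, the zero module having dimension $-\infty$. An $R$-module $L$ is "in dimension $<n$" if there is a finitely generated submodule $N\subseteq L$ with $\dim\operatorname{Supp}(L/N)<n$. *)

theory Defs
  imports "HOL-Algebra.Algebra" "HOL-Library.Extended_Real"
begin

definition module_hom ::
  "('a, 'r) ring_scheme \<Rightarrow> ('a, 'b) module \<Rightarrow> ('a, 'c) module \<Rightarrow> ('b \<Rightarrow> 'c) \<Rightarrow> bool" where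
  "module_hom R A B f \<longleftrightarrow>
     f \<in> carrier A \<rightarrow> carrier B \<and>
     (\<forall>x\<in>carrier A. \<forall>y\<in>carrier A. f (x \<oplus>\<^bsub>A\<^esub> y) = f x \<oplus>\<^bsub>B\<^esub> f y) \<and>
     (\<forall>a\<in>carrier R. \<forall>x\<in>carrier A. f (a \<odot>\<^bsub>A\<^esub> x) = a \<odot>\<^bsub>B\<^esub> f x)"

definition short_exact ::
  "('a, 'r) ring_scheme \<Rightarrow> ('a, 'b) module \<Rightarrow> ('a, 'c) module \<Rightarrow> ('a, 'd) module
     \<Rightarrow> ('b \<Rightarrow> 'c) \<Rightarrow> ('c \<Rightarrow> 'd) \<Rightarrow> bool" where
  "short_exact R A B C f g \<longleftrightarrow>
     module_hom R A B f \<and> module_hom R B C g \<and>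
     inj_on f (carrier A) \<and>
     g ` carrier B = carrier C \<and>
     f ` carrier A = {y \<in> carrier B. g y = \<zero>\<^bsub>C\<^esub>}"

definition gen_submodule :: "('a, 'r) ring_scheme \<Rightarrow> ('a, 'b) module \<Rightarrow> 'b set \<Rightarrow> 'b set" where
  "gen_submodule R L S = \<Inter>{H. submodule H R L \<and> S \<subseteq> H}"

definition fin_gen_submodule :: "('a, 'r) ring_scheme \<Rightarrow> ('a, 'b) module \<Rightarrow> 'b set \<Rightarrow> bool" where
  "fin_gen_submodule R L N \<longleftrightarrow> submodule N R L \<and>
     (\<exists>S. finite S \<and> S \<subseteq> carrier L \<and> N = gen_submodule R L S)"

definition quot_add :: "('a, 'b) module \<Rightarrow> 'b set \<Rightarrow> 'b set \<Rightarrow> 'b set" where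
  "quot_add L A B = {x \<oplus>\<^bsub>L\<^esub> y | x y. x \<in> A \<and> y \<in> B}"

definition quot_smult :: "('a, 'b) module \<Rightarrow> 'b set \<Rightarrow> 'a \<Rightarrow> 'b set \<Rightarrow> 'b set" where
  "quot_smult L N a A = (\<Union>x\<in>A. {h \<oplus>\<^bsub>L\<^esub> (a \<odot>\<^bsub>L\<^esub> x) | h. h \<in> N})"

definition quot_module :: "('a, 'r) ring_scheme \<Rightarrow> ('a, 'b) module \<Rightarrow> 'b set \<Rightarrow> ('a, 'b set) module" where
  "quot_module R L N =
     \<lparr> carrier = {{h \<oplus>\<^bsub>L\<^esub> x | h. h \<in> N} | x. x \<in> carrier L},
       monoid.mult = undefined, one = undefined,
       ring.zero = N,
       ring.add = quot_add L,
       smult = quot_smult L N \<rparr>"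

text \<open>Support: primes p with L_p \<noteq> 0, i.e. some x/1 \<noteq> 0 in L_p, i.e. no s \<notin> p kills x.\<close>
definition supp :: "('a, 'r) ring_scheme \<Rightarrow> ('a, 'b) module \<Rightarrow> 'a set set" where
  "supp R L = {p. primeideal p R \<and>
     (\<exists>x\<in>carrier L. \<forall>s\<in>carrier R - p. s \<odot>\<^bsub>L\<^esub> x \<noteq> \<zero>\<^bsub>L\<^esub>)}"

text \<open>Krull dimension of R/p: supremum of lengths k of chains of primes
  p \<subseteq> P0 \<subset> P1 \<subset> ... \<subset> Pk (primes of R/p correspond to primes of R containing p).\<close>
definition dim_quot :: "('a, 'r) ring_scheme \<Rightarrow> 'a set \<Rightarrow> enat" where
  "dim_quot R p = Sup {enat k | k. \<exists>c :: nat \<Rightarrow> 'a set.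
      (\<forall>i\<le>k. primeideal (c i) R) \<and> p \<subseteq> c 0 \<and> (\<forall>i<k. c i \<subset> c (Suc i))}"

text \<open>dim Supp L = sup of dim R/p over p in Supp L; -\<infinity> for the zero module.\<close>
definition dim_supp :: "('a, 'r) ring_scheme \<Rightarrow> ('a, 'b) module \<Rightarrow> ereal" where
  "dim_supp R L = Sup ((\<lambda>p. ereal_of_enat (dim_quot R p)) ` supp R L)"

definition in_dim_less :: "('a, 'r) ring_scheme \<Rightarrow> ('a, 'b) module \<Rightarrow> nat \<Rightarrow> bool" where
  "in_dim_less R L n \<longleftrightarrow>
     (\<exists>N. fin_gen_submodule R L N \<and> dim_supp R (quot_module R L N) < ereal (real n))"

end

theory Submission
  imports Defs
begin

text \<open>Given a short exact sequence and a submodule N of M, f induces an embedding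
  M'/f\<inverse>(N) \<rightarrow> M/N and g a surjection M/N \<rightarrow> M''/g(N), so both supports shrink.
  Conversely, for finitely generated N' \<subseteq> M' and N'' \<subseteq> M'', let N be generated by f(N') and
  lifts of generators of N''. If every element of M' and of M'' is killed modulo N' resp. N''
  by some element outside a prime p, then so is every x \<in> M modulo N: some s \<notin> p gives
  s g(x) \<in> N'', hence s x \<in> f(M') + N, and a further t \<notin> p puts t s x into N. Thus
  Supp(M/N) \<subseteq> Supp(M'/N') \<union> Supp(M''/N''). The only non-formal point is that f\<inverse>(N) is again
  finitely generated, because over a Noetherian ring submodules of finitely generated modules are.\<close>

text \<open>\<open>gen_submodule\<close>, \<open>quot_module\<close> etc. take modules of the record type \<open>('a, 'b) module\<close>,
  whereas the library locale \<open>module\<close> allows arbitrary extensions of that record.\<close>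

locale plain_module = module R M
  for R :: "('a, 'r) ring_scheme" (structure) and M :: "('a, 'b) module" (structure)

context plain_module
begin

lemma a_minus_add_cancel: "x \<in> carrier M \<Longrightarrow> y \<in> carrier M \<Longrightarrow> (x \<ominus>\<^bsub>M\<^esub> y) \<oplus>\<^bsub>M\<^esub> y = x"
  by (simp add: a_minus_def M.a_assoc M.l_neg)

lemma add_add_neg_cancel: "x \<in> carrier M \<Longrightarrow> y \<in> carrier M \<Longrightarrow> x \<oplus>\<^bsub>M\<^esub> (y \<oplus>\<^bsub>M\<^esub> \<ominus>\<^bsub>M\<^esub> x) = y"
  by (metis M.a_lcomm M.add.inv_closed M.r_neg M.r_zero)

lemma add_a_minus_cancel: "x \<in> carrier M \<Longrightarrow> y \<in> carrier M \<Longrightarrow> (x \<oplus>\<^bsub>M\<^esub> y) \<ominus>\<^bsub>M\<^esub> x = y"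
  by (simp add: a_minus_def M.a_ac add_add_neg_cancel)

lemma a_minus_a_minus_cancel:
  "x \<in> carrier M \<Longrightarrow> y \<in> carrier M \<Longrightarrow> z \<in> carrier M \<Longrightarrow>
    (x \<ominus>\<^bsub>M\<^esub> z) \<ominus>\<^bsub>M\<^esub> (y \<ominus>\<^bsub>M\<^esub> z) = x \<ominus>\<^bsub>M\<^esub> y"
  by (simp add: a_minus_def M.a_ac M.minus_add add_add_neg_cancel)

lemma submodule_zero [simp]: "submodule N R M \<Longrightarrow> \<zero>\<^bsub>M\<^esub> \<in> N"
  by (simp add: submodule_def subgroup_def)

lemma submodule_minus: "submodule N R M \<Longrightarrow> a \<in> N \<Longrightarrow> b \<in> N \<Longrightarrow> a \<ominus>\<^bsub>M\<^esub> b \<in> N"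
  unfolding a_minus_def using submoduleE(3,5) by blast

lemma submodule_Int: "submodule K R M \<Longrightarrow> submodule N R M \<Longrightarrow> submodule (K \<inter> N) R M"
  by (rule submoduleI) (use submoduleE[of K] submoduleE[of N] in auto)

lemma submodule_gen_submodule: "S \<subseteq> carrier M \<Longrightarrow> submodule (gen_submodule R M S) R M"
  unfolding gen_submodule_def
proof (rule submoduleI)
  let ?F = "{N. submodule N R M \<and> S \<subseteq> N}"
  assume "S \<subseteq> carrier M"
  then have "carrier M \<in> ?F" using carrier_is_submodule by auto
  then show "\<Inter>?F \<subseteq> carrier M" by auto
  show "\<zero>\<^bsub>M\<^esub> \<in> \<Inter>?F" by auto
  show "\<ominus>\<^bsub>M\<^esub> a \<in> \<Inter>?F" if "a \<in> \<Inter>?F" for a using that submoduleE(3) by blast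
  show "a \<oplus>\<^bsub>M\<^esub> b \<in> \<Inter>?F" if "a \<in> \<Inter>?F" "b \<in> \<Inter>?F" for a b using that submoduleE(5) by blast
  show "r \<odot>\<^bsub>M\<^esub> x \<in> \<Inter>?F" if "r \<in> carrier R" "x \<in> \<Inter>?F" for r x using that submoduleE(4) by blast
qed

lemma gen_submodule_incl: "S \<subseteq> gen_submodule R M S"
  unfolding gen_submodule_def by auto

lemma gen_submodule_minimal: "submodule N R M \<Longrightarrow> S \<subseteq> N \<Longrightarrow> gen_submodule R M S \<subseteq> N"
  unfolding gen_submodule_def by auto

lemma gen_submodule_mono: "S \<subseteq> T \<Longrightarrow> T \<subseteq> carrier M \<Longrightarrow> gen_submodule R M S \<subseteq> gen_submodule R M T"
  using gen_submodule_minimal submodule_gen_submodule gen_submodule_incl by (meson order_trans)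

lemma gen_submodule_insert:
  assumes a: "a \<in> carrier M" and S: "S \<subseteq> carrier M"
  shows "gen_submodule R M (insert a S) \<subseteq>
    {r \<odot>\<^bsub>M\<^esub> a \<oplus>\<^bsub>M\<^esub> y | r y. r \<in> carrier R \<and> y \<in> gen_submodule R M S}"
    (is "_ \<subseteq> ?E")
proof (rule gen_submodule_minimal)
  let ?G = "gen_submodule R M S"
  have G: "submodule ?G R M" using submodule_gen_submodule[OF S] .
  have Gc: "?G \<subseteq> carrier M" using submoduleE(1)[OF G] .
  have memE: "r \<odot>\<^bsub>M\<^esub> a \<oplus>\<^bsub>M\<^esub> y \<in> ?E" if "r \<in> carrier R" "y \<in> ?G" for r y
    using that by blast
  show "insert a S \<subseteq> ?E"
  proof
    fix x assume "x \<in> insert a S"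
    then consider "x = a" | "x \<in> S" by blast
    then show "x \<in> ?E"
    proof cases
      case 1
      then show ?thesis using a G memE[of "\<one>" "\<zero>\<^bsub>M\<^esub>"] by simp
    next
      case 2
      then have "x \<in> gen_submodule R M S" "x \<in> carrier M" using S gen_submodule_incl by auto
      then show ?thesis using a memE[of "\<zero>" x] by simp
    qed
  qed
  show "submodule ?E R M"
  proof (rule submoduleI)
    show "?E \<subseteq> carrier M" using Gc a by auto
    show "\<zero>\<^bsub>M\<^esub> \<in> ?E" using a G memE[of "\<zero>" "\<zero>\<^bsub>M\<^esub>"] by simp
    show "\<ominus>\<^bsub>M\<^esub> x \<in> ?E" if "x \<in> ?E" for x
    proof -
      obtain r y where ry: "r \<in> carrier R" "y \<in> ?G" "x = r \<odot>\<^bsub>M\<^esub> a \<oplus>\<^bsub>M\<^esub> y"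
        using \<open>x \<in> ?E\<close> by blast
      then have "\<ominus>\<^bsub>M\<^esub> x = (\<ominus> r) \<odot>\<^bsub>M\<^esub> a \<oplus>\<^bsub>M\<^esub> (\<ominus>\<^bsub>M\<^esub> y)"
        using a Gc by (auto simp: M.minus_add smult_l_minus)
      then show ?thesis using memE ry submoduleE(3)[OF G] by simp
    qed
    show "x1 \<oplus>\<^bsub>M\<^esub> x2 \<in> ?E" if "x1 \<in> ?E" "x2 \<in> ?E" for x1 x2
    proof -
      obtain r1 y1 where 1: "r1 \<in> carrier R" "y1 \<in> ?G" "x1 = r1 \<odot>\<^bsub>M\<^esub> a \<oplus>\<^bsub>M\<^esub> y1"
        using \<open>x1 \<in> ?E\<close> by blast
      obtain r2 y2 where 2: "r2 \<in> carrier R" "y2 \<in> ?G" "x2 = r2 \<odot>\<^bsub>M\<^esub> a \<oplus>\<^bsub>M\<^esub> y2"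
        using \<open>x2 \<in> ?E\<close> by blast
      have "y1 \<in> carrier M" "y2 \<in> carrier M" using 1 2 Gc by auto
      then have "x1 \<oplus>\<^bsub>M\<^esub> x2 = (r1 \<oplus> r2) \<odot>\<^bsub>M\<^esub> a \<oplus>\<^bsub>M\<^esub> (y1 \<oplus>\<^bsub>M\<^esub> y2)"
        using 1 2 a by (simp add: smult_l_distr M.a_ac)
      then show ?thesis using memE 1 2 submoduleE(5)[OF G] by simp
    qed
    show "c \<odot>\<^bsub>M\<^esub> x \<in> ?E" if "c \<in> carrier R" "x \<in> ?E" for c x
    proof -
      obtain r y where ry: "r \<in> carrier R" "y \<in> ?G" "x = r \<odot>\<^bsub>M\<^esub> a \<oplus>\<^bsub>M\<^esub> y"
        using \<open>x \<in> ?E\<close> by blast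
      then have "c \<odot>\<^bsub>M\<^esub> x = (c \<otimes> r) \<odot>\<^bsub>M\<^esub> a \<oplus>\<^bsub>M\<^esub> (c \<odot>\<^bsub>M\<^esub> y)"
        using a Gc \<open>c \<in> carrier R\<close> by (auto simp: smult_r_distr smult_assoc1)
      then show ?thesis using memE ry \<open>c \<in> carrier R\<close> submoduleE(4)[OF G] by simp
    qed
  qed
qed

end

locale module_map = A: plain_module R A + B: plain_module R B
  for R :: "('a, 'r) ring_scheme" (structure)
    and A :: "('a, 'b) module" (structure) and B :: "('a, 'c) module" (structure) +
  fixes f :: "'b \<Rightarrow> 'c"
  assumes module_hom: "module_hom R A B f"

sublocale module_map \<subseteq> abelian_group_hom A B f
proof (rule abelian_group_homI)
  show "group_hom (add_monoid A) (add_monoid B) f"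
    using module_hom A.a_group B.a_group unfolding module_hom_def
    by (intro group_hom.intro group_hom_axioms.intro) (auto intro!: homI)
qed unfold_locales

context module_map
begin

lemma hom_smult [simp]: "r \<in> carrier R \<Longrightarrow> x \<in> carrier A \<Longrightarrow> f (r \<odot>\<^bsub>A\<^esub> x) = r \<odot>\<^bsub>B\<^esub> f x"
  using module_hom unfolding module_hom_def by blast

lemma hom_a_minus [simp]:
  "x \<in> carrier A \<Longrightarrow> y \<in> carrier A \<Longrightarrow> f (x \<ominus>\<^bsub>A\<^esub> y) = f x \<ominus>\<^bsub>B\<^esub> f y"
  by (simp add: a_minus_def)

lemma submodule_vimage: "submodule N R B \<Longrightarrow> submodule {x \<in> carrier A. f x \<in> N} R A"
  by (rule A.submoduleI) (use B.submoduleE[of N] in auto)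

lemma submodule_image: "submodule N R A \<Longrightarrow> submodule (f ` N) R B"
proof (rule B.submoduleI)
  assume N: "submodule N R A"
  have Nc: "N \<subseteq> carrier A" using A.submoduleE(1)[OF N] .
  then show "f ` N \<subseteq> carrier B" by auto
  show "\<zero>\<^bsub>B\<^esub> \<in> f ` N" using N by (metis A.submodule_zero hom_zero image_eqI)
  show "\<ominus>\<^bsub>B\<^esub> y \<in> f ` N" if "y \<in> f ` N" for y
    using that Nc A.submoduleE(3)[OF N] by (auto simp: subset_iff simp flip: hom_a_inv)
  show "y1 \<oplus>\<^bsub>B\<^esub> y2 \<in> f ` N" if "y1 \<in> f ` N" "y2 \<in> f ` N" for y1 y2
    using that Nc A.submoduleE(5)[OF N] by (auto simp: subset_iff simp flip: hom_add)
  show "r \<odot>\<^bsub>B\<^esub> y \<in> f ` N" if "r \<in> carrier R" "y \<in> f ` N" for r y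
    using that Nc A.submoduleE(4)[OF N] by (auto simp: subset_iff simp flip: hom_smult)
qed

lemma gen_submodule_image:
  assumes S: "S \<subseteq> carrier A"
  shows "f ` gen_submodule R A S = gen_submodule R B (f ` S)"
proof
  have fS: "f ` S \<subseteq> carrier B" using S by auto
  have "gen_submodule R A S \<subseteq> {x \<in> carrier A. f x \<in> gen_submodule R B (f ` S)}"
    using S B.gen_submodule_incl[of "f ` S"]
    by (intro A.gen_submodule_minimal submodule_vimage B.submodule_gen_submodule[OF fS]) auto
  then show "f ` gen_submodule R A S \<subseteq> gen_submodule R B (f ` S)" by blast
  show "gen_submodule R B (f ` S) \<subseteq> f ` gen_submodule R A S"
    using A.gen_submodule_incl[of S]
    by (intro B.gen_submodule_minimal submodule_image A.submodule_gen_submodule[OF S]) auto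
qed

end

section \<open>Submodules of finitely generated modules over a Noetherian ring\<close>

text \<open>For \<open>K \<subseteq> G + R a\<close> it plays the role of
  the ideal of last coordinates in the proof that submodules of \<open>R\<^sup>n\<close> are finitely generated.\<close>

definition coeff_ideal ::
  "('a, 'r) ring_scheme \<Rightarrow> ('a, 'b) module \<Rightarrow> 'b set \<Rightarrow> 'b set \<Rightarrow> 'b \<Rightarrow> 'a set" where
  "coeff_ideal R M K G a = {r \<in> carrier R. \<exists>k\<in>K. k \<ominus>\<^bsub>M\<^esub> r \<odot>\<^bsub>M\<^esub> a \<in> G}"

context plain_module
begin

lemma ideal_coeff_ideal:
  assumes K: "submodule K R M" and G: "submodule G R M" and a: "a \<in> carrier M"
  shows "ideal (coeff_ideal R M K G a) R"
proof -
  let ?I = "coeff_ideal R M K G a"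
  have Kc: "K \<subseteq> carrier M" using submoduleE(1)[OF K] .
  have smult_closed: "c \<otimes> r \<in> ?I" if r: "r \<in> ?I" and c: "c \<in> carrier R" for r c
  proof -
    obtain k where k: "k \<in> K" "k \<ominus>\<^bsub>M\<^esub> r \<odot>\<^bsub>M\<^esub> a \<in> G" "r \<in> carrier R"
      using r unfolding coeff_ideal_def by blast
    have "c \<odot>\<^bsub>M\<^esub> k \<ominus>\<^bsub>M\<^esub> (c \<otimes> r) \<odot>\<^bsub>M\<^esub> a = c \<odot>\<^bsub>M\<^esub> (k \<ominus>\<^bsub>M\<^esub> r \<odot>\<^bsub>M\<^esub> a)"
      using k Kc c a by (auto simp: a_minus_def smult_r_distr smult_r_minus smult_assoc1)
    then show ?thesis
      using k c submoduleE(4)[OF G] submoduleE(4)[OF K] unfolding coeff_ideal_def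
      by (metis (mono_tags, lifting) R.m_closed mem_Collect_eq)
  qed
  have add_closed: "r1 \<oplus> r2 \<in> ?I" if r1: "r1 \<in> ?I" and r2: "r2 \<in> ?I" for r1 r2
  proof -
    obtain k1 where 1: "k1 \<in> K" "k1 \<ominus>\<^bsub>M\<^esub> r1 \<odot>\<^bsub>M\<^esub> a \<in> G" "r1 \<in> carrier R"
      using r1 unfolding coeff_ideal_def by blast
    obtain k2 where 2: "k2 \<in> K" "k2 \<ominus>\<^bsub>M\<^esub> r2 \<odot>\<^bsub>M\<^esub> a \<in> G" "r2 \<in> carrier R"
      using r2 unfolding coeff_ideal_def by blast
    have "k1 \<in> carrier M" "k2 \<in> carrier M" using 1 2 Kc by auto
    then have "(k1 \<oplus>\<^bsub>M\<^esub> k2) \<ominus>\<^bsub>M\<^esub> (r1 \<oplus> r2) \<odot>\<^bsub>M\<^esub> a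
        = (k1 \<ominus>\<^bsub>M\<^esub> r1 \<odot>\<^bsub>M\<^esub> a) \<oplus>\<^bsub>M\<^esub> (k2 \<ominus>\<^bsub>M\<^esub> r2 \<odot>\<^bsub>M\<^esub> a)"
      using 1 2 a by (simp add: a_minus_def smult_l_distr M.minus_add M.a_ac)
    then show ?thesis
      using 1 2 submoduleE(5)[OF G] submoduleE(5)[OF K] unfolding coeff_ideal_def
      by (metis (mono_tags, lifting) R.add.m_closed mem_Collect_eq)
  qed
  have "\<zero> \<in> ?I"
    using K G a submoduleE(3)[OF G, of "\<zero>\<^bsub>M\<^esub>"] unfolding coeff_ideal_def
    by (auto simp: a_minus_def intro!: bexI[of _ "\<zero>\<^bsub>M\<^esub>"])
  moreover have "\<ominus> r \<in> ?I" if "r \<in> ?I" for r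
    using smult_closed[OF that, of "\<ominus> \<one>"] that by (simp add: R.l_minus coeff_ideal_def)
  ultimately show ?thesis
    using smult_closed add_closed
    by (intro idealI R.ring_axioms R.add.subgroupI)
       (auto simp: coeff_ideal_def R.m_comm)
qed

lemma submodule_subset_by_coeff_ideal:
  assumes a: "a \<in> carrier M" and S: "S \<subseteq> carrier M"
    and K: "submodule K R M" and K': "submodule K' R M" and "K' \<subseteq> K"
    and K_sub: "K \<subseteq> gen_submodule R M (insert a S)"
    and Int_sub: "K \<inter> gen_submodule R M S \<subseteq> K'"
    and coeff_sub:
      "coeff_ideal R M K (gen_submodule R M S) a \<subseteq> coeff_ideal R M K' (gen_submodule R M S) a"
  shows "K \<subseteq> K'"
proof
  let ?G = "gen_submodule R M S"
  have G: "submodule ?G R M" using submodule_gen_submodule[OF S] .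
  fix k assume k: "k \<in> K"
  then obtain r y where ry: "r \<in> carrier R" "y \<in> ?G" "k = r \<odot>\<^bsub>M\<^esub> a \<oplus>\<^bsub>M\<^esub> y"
    using K_sub gen_submodule_insert[OF a S] by blast
  have y_carrier: "y \<in> carrier M" using ry(2) submoduleE(1)[OF G] by blast
  have "k \<ominus>\<^bsub>M\<^esub> r \<odot>\<^bsub>M\<^esub> a = y" using ry a y_carrier by (simp add: add_a_minus_cancel)
  then have "r \<in> coeff_ideal R M K ?G a" using k ry(1,2) unfolding coeff_ideal_def by blast
  then obtain k' where k': "k' \<in> K'" "k' \<ominus>\<^bsub>M\<^esub> r \<odot>\<^bsub>M\<^esub> a \<in> ?G"
    using coeff_sub unfolding coeff_ideal_def by blast
  have carrier: "k \<in> carrier M" "k' \<in> carrier M"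
    using k k' \<open>K' \<subseteq> K\<close> submoduleE(1)[OF K] by auto
  have "(k \<ominus>\<^bsub>M\<^esub> r \<odot>\<^bsub>M\<^esub> a) \<ominus>\<^bsub>M\<^esub> (k' \<ominus>\<^bsub>M\<^esub> r \<odot>\<^bsub>M\<^esub> a) \<in> ?G"
    using submodule_minus[OF G] \<open>k \<ominus>\<^bsub>M\<^esub> r \<odot>\<^bsub>M\<^esub> a = y\<close> ry(2) k'(2) by simp
  then have "k \<ominus>\<^bsub>M\<^esub> k' \<in> ?G" using carrier ry(1) a by (simp add: a_minus_a_minus_cancel)
  moreover have "k \<ominus>\<^bsub>M\<^esub> k' \<in> K" using submodule_minus[OF K k] k'(1) \<open>K' \<subseteq> K\<close> by blast
  ultimately have "(k \<ominus>\<^bsub>M\<^esub> k') \<oplus>\<^bsub>M\<^esub> k' \<in> K'" using Int_sub k'(1) submoduleE(5)[OF K'] by blast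
  then show "k \<in> K'" using carrier by (simp add: a_minus_add_cancel)
qed

lemma submodule_of_fin_gen_is_fin_gen:
  assumes noeth: "noetherian_ring R" and "finite S" "S \<subseteq> carrier M"
    and "submodule K R M" "K \<subseteq> gen_submodule R M S"
  shows "\<exists>T. finite T \<and> T \<subseteq> K \<and> K = gen_submodule R M T"
  using assms(2-)
proof (induction S arbitrary: K rule: finite_induct)
  case empty
  then show ?case using gen_submodule_minimal[of K "{}"] by (intro exI[of _ "{}"]) auto
next
  case (insert a S)
  let ?G = "gen_submodule R M S"
  have a: "a \<in> carrier M" and S: "S \<subseteq> carrier M" using insert.prems(1) by auto
  have K: "submodule K R M" and G: "submodule ?G R M"
    using insert.prems(2) submodule_gen_submodule[OF S] by auto
  obtain T0 where T0: "finite T0" "T0 \<subseteq> K \<inter> ?G" "K \<inter> ?G = gen_submodule R M T0"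
    using insert.IH[OF S submodule_Int[OF K G]] by blast
  obtain A where A: "A \<subseteq> carrier R" "finite A" "coeff_ideal R M K ?G a = Idl A"
    using noetherian_ring.finetely_gen[OF noeth ideal_coeff_ideal[OF K G a]] by blast
  have "\<forall>r\<in>A. \<exists>k\<in>K. k \<ominus>\<^bsub>M\<^esub> r \<odot>\<^bsub>M\<^esub> a \<in> ?G"
    using A R.genideal_self[OF A(1)] unfolding coeff_ideal_def by auto
  then obtain lift where lift: "\<And>r. r \<in> A \<Longrightarrow> lift r \<in> K \<and> lift r \<ominus>\<^bsub>M\<^esub> r \<odot>\<^bsub>M\<^esub> a \<in> ?G"
    by metis
  \<comment> \<open>generators of \<open>K \<inter> G\<close>, plus elements of K realising generators of the coefficient ideal\<close>
  define T where "T = T0 \<union> lift ` A"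
  have T: "finite T" "T \<subseteq> K" using T0 A(2) lift unfolding T_def by auto
  then have T_carrier: "T \<subseteq> carrier M" using submoduleE(1)[OF K] by blast
  let ?K' = "gen_submodule R M T"
  have K': "submodule ?K' R M" and "?K' \<subseteq> K"
    using submodule_gen_submodule[OF T_carrier] gen_submodule_minimal[OF K T(2)] by auto
  have "A \<subseteq> coeff_ideal R M ?K' ?G a"
    using lift A(1) gen_submodule_incl[of T] unfolding coeff_ideal_def T_def by blast
  then have "coeff_ideal R M K ?G a \<subseteq> coeff_ideal R M ?K' ?G a"
    using R.genideal_minimal[OF ideal_coeff_ideal[OF K' G a]] A(3) by simp
  moreover have "K \<inter> ?G \<subseteq> ?K'"
    using T0(3) gen_submodule_mono[of T0 T] T_carrier unfolding T_def by auto
  ultimately have "K \<subseteq> ?K'"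
    using submodule_subset_by_coeff_ideal[OF a S K K' \<open>?K' \<subseteq> K\<close> insert.prems(3)] by blast
  then show ?case using \<open>?K' \<subseteq> K\<close> T by blast
qed

end

section \<open>Support of a quotient module\<close>

text \<open>\<open>Supp (M/N)\<close>, read off in M itself (\<open>supp_quot_module\<close>).\<close>

definition quot_supp :: "('a, 'r) ring_scheme \<Rightarrow> ('a, 'b) module \<Rightarrow> 'b set \<Rightarrow> 'a set set" where
  "quot_supp R M N = {p. primeideal p R \<and> (\<exists>x\<in>carrier M. \<forall>s\<in>carrier R - p. s \<odot>\<^bsub>M\<^esub> x \<notin> N)}"

definition dim_primes :: "('a, 'r) ring_scheme \<Rightarrow> 'a set set \<Rightarrow> ereal" where
  "dim_primes R P = Sup ((\<lambda>p. ereal_of_enat (dim_quot R p)) ` P)"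

lemma dim_primes_mono: "P \<subseteq> Q \<Longrightarrow> dim_primes R P \<le> dim_primes R Q"
  unfolding dim_primes_def by (rule Sup_subset_mono) auto

lemma dim_primes_Un: "dim_primes R (P \<union> Q) = sup (dim_primes R P) (dim_primes R Q)"
  unfolding dim_primes_def by (simp add: image_Un Sup_union_distrib)

context plain_module
begin

lemma coset_eq_submodule_iff:
  assumes N: "submodule N R M" and z: "z \<in> carrier M"
  shows "{h \<oplus>\<^bsub>M\<^esub> z | h. h \<in> N} = N \<longleftrightarrow> z \<in> N"
proof
  assume "{h \<oplus>\<^bsub>M\<^esub> z | h. h \<in> N} = N"
  moreover have "\<zero>\<^bsub>M\<^esub> \<oplus>\<^bsub>M\<^esub> z \<in> {h \<oplus>\<^bsub>M\<^esub> z | h. h \<in> N}"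
    using submodule_zero[OF N] by blast
  ultimately show "z \<in> N" using z by simp
next
  assume zN: "z \<in> N"
  have "y \<in> {h \<oplus>\<^bsub>M\<^esub> z | h. h \<in> N}" if "y \<in> N" for y
  proof -
    have "y \<in> carrier M" using that submoduleE(1)[OF N] by blast
    then have "y = (y \<ominus>\<^bsub>M\<^esub> z) \<oplus>\<^bsub>M\<^esub> z" using z by (simp add: a_minus_def M.a_assoc M.l_neg)
    then show ?thesis using submodule_minus[OF N that zN] by blast
  qed
  moreover have "h \<oplus>\<^bsub>M\<^esub> z \<in> N" if "h \<in> N" for h using zN that submoduleE(5)[OF N] by blast
  ultimately show "{h \<oplus>\<^bsub>M\<^esub> z | h. h \<in> N} = N" by blast
qed

lemma quot_smult_coset:
  assumes N: "submodule N R M" and x: "x \<in> carrier M" and s: "s \<in> carrier R"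
  shows "quot_smult M N s {h \<oplus>\<^bsub>M\<^esub> x | h. h \<in> N} = {h \<oplus>\<^bsub>M\<^esub> (s \<odot>\<^bsub>M\<^esub> x) | h. h \<in> N}"
  unfolding quot_smult_def
proof (intro equalityI subsetI)
  fix y assume "y \<in> (\<Union>z\<in>{h \<oplus>\<^bsub>M\<^esub> x | h. h \<in> N}. {h \<oplus>\<^bsub>M\<^esub> (s \<odot>\<^bsub>M\<^esub> z) | h. h \<in> N})"
  then obtain h0 h where h: "h0 \<in> N" "h \<in> N" and y: "y = h \<oplus>\<^bsub>M\<^esub> (s \<odot>\<^bsub>M\<^esub> (h0 \<oplus>\<^bsub>M\<^esub> x))"
    by blast
  have "h0 \<in> carrier M" "h \<in> carrier M" using h submoduleE(1)[OF N] by auto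
  then have "y = (h \<oplus>\<^bsub>M\<^esub> s \<odot>\<^bsub>M\<^esub> h0) \<oplus>\<^bsub>M\<^esub> (s \<odot>\<^bsub>M\<^esub> x)"
    using y x s by (simp add: smult_r_distr M.a_assoc)
  moreover have "h \<oplus>\<^bsub>M\<^esub> s \<odot>\<^bsub>M\<^esub> h0 \<in> N" using submoduleE(4,5)[OF N] h s by blast
  ultimately show "y \<in> {h \<oplus>\<^bsub>M\<^esub> (s \<odot>\<^bsub>M\<^esub> x) | h. h \<in> N}" by blast
next
  fix y assume "y \<in> {h \<oplus>\<^bsub>M\<^esub> (s \<odot>\<^bsub>M\<^esub> x) | h. h \<in> N}"
  moreover have "x \<in> {h \<oplus>\<^bsub>M\<^esub> x | h. h \<in> N}"
    using N x by (metis (mono_tags, lifting) M.l_zero mem_Collect_eq submodule_zero)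
  ultimately show "y \<in> (\<Union>z\<in>{h \<oplus>\<^bsub>M\<^esub> x | h. h \<in> N}. {h \<oplus>\<^bsub>M\<^esub> (s \<odot>\<^bsub>M\<^esub> z) | h. h \<in> N})"
    by blast
qed

lemma supp_quot_module:
  assumes N: "submodule N R M"
  shows "supp R (quot_module R M N) = quot_supp R M N"
proof -
  have "(\<exists>Y\<in>carrier (quot_module R M N). \<forall>s\<in>carrier R - p.
          module.smult (quot_module R M N) s Y \<noteq> ring.zero (quot_module R M N))
    \<longleftrightarrow> (\<exists>x\<in>carrier M. \<forall>s\<in>carrier R - p. s \<odot>\<^bsub>M\<^esub> x \<notin> N)" for p
  proof -
    have "(\<exists>Y\<in>carrier (quot_module R M N). \<forall>s\<in>carrier R - p.
            module.smult (quot_module R M N) s Y \<noteq> ring.zero (quot_module R M N))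
      \<longleftrightarrow> (\<exists>x\<in>carrier M. \<forall>s\<in>carrier R - p.
            quot_smult M N s {h \<oplus>\<^bsub>M\<^esub> x | h. h \<in> N} \<noteq> N)"
      unfolding quot_module_def by auto
    also have "\<dots> \<longleftrightarrow> (\<exists>x\<in>carrier M. \<forall>s\<in>carrier R - p. s \<odot>\<^bsub>M\<^esub> x \<notin> N)"
      using quot_smult_coset[OF N] coset_eq_submodule_iff[OF N] by auto
    finally show ?thesis .
  qed
  then show ?thesis unfolding supp_def quot_supp_def by auto
qed

lemma in_dim_less_iff:
  "in_dim_less R M n \<longleftrightarrow>
     (\<exists>N. fin_gen_submodule R M N \<and> dim_primes R (quot_supp R M N) < ereal (real n))"
  unfolding in_dim_less_def dim_supp_def dim_primes_def fin_gen_submodule_def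
  using supp_quot_module by metis

end

section \<open>Short exact sequences\<close>

context module_map
begin

lemma quot_supp_vimage_subset: "quot_supp R A {x \<in> carrier A. f x \<in> N} \<subseteq> quot_supp R B N"
proof
  fix p assume "p \<in> quot_supp R A {x \<in> carrier A. f x \<in> N}"
  then obtain x where p: "primeideal p R" and x: "x \<in> carrier A"
    and x_out: "\<forall>s\<in>carrier R - p. s \<odot>\<^bsub>A\<^esub> x \<notin> {x \<in> carrier A. f x \<in> N}"
    unfolding quot_supp_def by blast
  have "s \<odot>\<^bsub>B\<^esub> f x \<notin> N" if s: "s \<in> carrier R - p" for s
    using x_out s x by auto
  then show "p \<in> quot_supp R B N" using p hom_closed[OF x] unfolding quot_supp_def by blast
qed

lemma quot_supp_image_subset:
  assumes surj: "f ` carrier A = carrier B"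
  shows "quot_supp R B (f ` N) \<subseteq> quot_supp R A N"
proof
  fix p assume "p \<in> quot_supp R B (f ` N)"
  then obtain y where p: "primeideal p R" and y: "y \<in> carrier B"
    and y_out: "\<forall>s\<in>carrier R - p. s \<odot>\<^bsub>B\<^esub> y \<notin> f ` N"
    unfolding quot_supp_def by blast
  obtain x where x: "x \<in> carrier A" "y = f x" using y surj by blast
  then have "\<forall>s\<in>carrier R - p. s \<odot>\<^bsub>A\<^esub> x \<notin> N" using y_out by (metis DiffD1 hom_smult image_eqI)
  then show "p \<in> quot_supp R A N" using p x(1) unfolding quot_supp_def by blast
qed

lemma fin_gen_submodule_image: "fin_gen_submodule R A N \<Longrightarrow> fin_gen_submodule R B (f ` N)"
  unfolding fin_gen_submodule_def
  using submodule_image gen_submodule_image by (metis finite_imageI hom_closed image_subsetI subsetD)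

lemma fin_gen_submodule_vimage:
  assumes noeth: "noetherian_ring R" and inj: "inj_on f (carrier A)"
    and N: "fin_gen_submodule R B N"
  shows "fin_gen_submodule R A {x \<in> carrier A. f x \<in> N}"
proof -
  let ?P = "{x \<in> carrier A. f x \<in> N}"
  have N_sub: "submodule N R B" using N unfolding fin_gen_submodule_def by simp
  obtain S where S: "finite S" "S \<subseteq> carrier B" and N_def: "N = gen_submodule R B S"
    using N unfolding fin_gen_submodule_def by auto
  let ?K = "N \<inter> f ` carrier A"
  have K: "submodule ?K R B"
    using B.submodule_Int[OF N_sub submodule_image[OF A.carrier_is_submodule]] .
  have K_sub: "?K \<subseteq> gen_submodule R B S" by (simp add: N_def)
  obtain T where T: "finite T" "T \<subseteq> ?K" "?K = gen_submodule R B T"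
    using B.submodule_of_fin_gen_is_fin_gen[OF noeth S K K_sub] by blast
  define T' where "T' = f -` T \<inter> carrier A"
  have T'_carrier: "T' \<subseteq> carrier A" unfolding T'_def by blast
  have "finite T'" using finite_vimage_IntI[OF T(1) inj] unfolding T'_def .
  have image_T': "f ` T' = T" using T(2) unfolding T'_def by auto
  let ?G = "gen_submodule R A T'"
  have "T' \<subseteq> ?P" using T(2) unfolding T'_def by blast
  then have "?G \<subseteq> ?P" by (intro A.gen_submodule_minimal submodule_vimage N_sub)
  moreover have "?P \<subseteq> ?G"
  proof
    fix x assume x: "x \<in> ?P"
    then have "f x \<in> ?K" by blast
    also have "?K = f ` ?G" using T(3) gen_submodule_image[OF T'_carrier] image_T' by simp
    finally obtain y where y: "y \<in> ?G" "f x = f y" by blast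
    moreover have "?G \<subseteq> carrier A"
      using A.submoduleE(1)[OF A.submodule_gen_submodule[OF T'_carrier]] .
    ultimately have "x = y" using x inj unfolding inj_on_def by blast
    then show "x \<in> ?G" using y(1) by simp
  qed
  ultimately have "?P = ?G" by blast
  then show ?thesis
    using \<open>finite T'\<close> T'_carrier submodule_vimage[OF N_sub] unfolding fin_gen_submodule_def by blast
qed

lemma in_dim_less_vimage:
  assumes "noetherian_ring R" "inj_on f (carrier A)" "in_dim_less R B n"
  shows "in_dim_less R A n"
proof -
  obtain N where N: "fin_gen_submodule R B N" "dim_primes R (quot_supp R B N) < real n"
    using assms(3) unfolding B.in_dim_less_iff by blast
  then show ?thesis
    unfolding A.in_dim_less_iff
    using fin_gen_submodule_vimage[OF assms(1,2) N(1)]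
      dim_primes_mono[OF quot_supp_vimage_subset] by (blast intro: le_less_trans)
qed

lemma in_dim_less_image:
  assumes "f ` carrier A = carrier B" "in_dim_less R A n"
  shows "in_dim_less R B n"
proof -
  obtain N where N: "fin_gen_submodule R A N" "dim_primes R (quot_supp R A N) < real n"
    using assms(2) unfolding A.in_dim_less_iff by blast
  then show ?thesis
    unfolding B.in_dim_less_iff
    using fin_gen_submodule_image[OF N(1)]
      dim_primes_mono[OF quot_supp_image_subset[OF assms(1)]] by (blast intro: le_less_trans)
qed

end

lemma short_exact_module_maps:
  assumes "module R A" "module R B" "module R C" "short_exact R A B C f g"
  shows "module_map R A B f" "module_map R B C g"
  using assms unfolding short_exact_def module_map_def module_map_axioms_def plain_module_def
  by auto

lemma short_exact_smult_decompose:
  assumes A: "module R A" and B: "module R B" and C: "module R C"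
    and exact: "short_exact R A B C f g"
    and N: "submodule N R B" and N''_sub: "N'' \<subseteq> g ` N"
    and x: "x \<in> carrier B" and s: "s \<in> carrier R" and sx: "s \<odot>\<^bsub>C\<^esub> g x \<in> N''"
  obtains u y where "u \<in> carrier A" "y \<in> N" "s \<odot>\<^bsub>B\<^esub> x = f u \<oplus>\<^bsub>B\<^esub> y"
proof -
  interpret f: module_map R A B f using short_exact_module_maps[OF A B C exact] by simp
  interpret g: module_map R B C g using short_exact_module_maps[OF A B C exact] by simp
  have ker: "f ` carrier A = {y \<in> carrier B. g y = \<zero>\<^bsub>C\<^esub>}"
    using exact unfolding short_exact_def by blast
  have "g (s \<odot>\<^bsub>B\<^esub> x) \<in> g ` N" using x s sx N''_sub by auto
  then obtain y where y: "y \<in> N" "g (s \<odot>\<^bsub>B\<^esub> x) = g y" by blast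
  have y_carrier: "y \<in> carrier B" using y(1) f.B.submoduleE(1)[OF N] by blast
  define w where "w = s \<odot>\<^bsub>B\<^esub> x \<ominus>\<^bsub>B\<^esub> y"
  have w_carrier: "w \<in> carrier B" using s x y_carrier by (simp add: w_def)
  have "g w = g (s \<odot>\<^bsub>B\<^esub> x) \<ominus>\<^bsub>C\<^esub> g y"
    unfolding w_def using s x y_carrier by (intro g.hom_a_minus) auto
  also have "\<dots> = \<zero>\<^bsub>C\<^esub>"
    unfolding y(2) using g.hom_closed[OF y_carrier] by (simp add: a_minus_def g.B.M.r_neg)
  finally obtain u where u: "u \<in> carrier A" "w = f u" using ker w_carrier by blast
  have "s \<odot>\<^bsub>B\<^esub> x = f u \<oplus>\<^bsub>B\<^esub> y"
    using s x y_carrier by (simp add: w_def f.B.a_minus_add_cancel flip: u(2))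
  then show ?thesis using that u(1) y(1) by blast
qed

lemma quot_supp_extension_subset:
  assumes A: "module R A" and B: "module R B" and C: "module R C"
    and exact: "short_exact R A B C f g"
    and N: "submodule N R B" and N'_sub: "f ` N' \<subseteq> N" and N''_sub: "N'' \<subseteq> g ` N"
  shows "quot_supp R B N \<subseteq> quot_supp R A N' \<union> quot_supp R C N''"
proof
  interpret f: module_map R A B f using short_exact_module_maps[OF A B C exact] by simp
  interpret g: module_map R B C g using short_exact_module_maps[OF A B C exact] by simp
  fix p assume "p \<in> quot_supp R B N"
  then obtain x where p: "primeideal p R" and x: "x \<in> carrier B"
    and x_out: "\<forall>s\<in>carrier R - p. s \<odot>\<^bsub>B\<^esub> x \<notin> N"
    unfolding quot_supp_def by blast
  show "p \<in> quot_supp R A N' \<union> quot_supp R C N''"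
  proof (rule ccontr)
    assume "p \<notin> quot_supp R A N' \<union> quot_supp R C N''"
    then have A_tors: "\<forall>u\<in>carrier A. \<exists>t\<in>carrier R - p. t \<odot>\<^bsub>A\<^esub> u \<in> N'"
      and C_tors: "\<forall>z\<in>carrier C. \<exists>s\<in>carrier R - p. s \<odot>\<^bsub>C\<^esub> z \<in> N''"
      using p unfolding quot_supp_def by auto
    obtain s where s: "s \<in> carrier R - p" "s \<odot>\<^bsub>C\<^esub> g x \<in> N''"
      using C_tors g.hom_closed[OF x] by blast
    then obtain u y where u: "u \<in> carrier A" and y: "y \<in> N"
      and sx: "s \<odot>\<^bsub>B\<^esub> x = f u \<oplus>\<^bsub>B\<^esub> y"
      using short_exact_smult_decompose[OF A B C exact N N''_sub x] by blast
    have y_carrier: "y \<in> carrier B" using y f.B.submoduleE(1)[OF N] by blast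
    obtain t where t: "t \<in> carrier R - p" "t \<odot>\<^bsub>A\<^esub> u \<in> N'" using A_tors u by blast
    have "(t \<otimes>\<^bsub>R\<^esub> s) \<odot>\<^bsub>B\<^esub> x = t \<odot>\<^bsub>B\<^esub> (f u \<oplus>\<^bsub>B\<^esub> y)"
      using t(1) s(1) x by (simp add: f.B.smult_assoc1 sx)
    also have "\<dots> = f (t \<odot>\<^bsub>A\<^esub> u) \<oplus>\<^bsub>B\<^esub> t \<odot>\<^bsub>B\<^esub> y"
      using t(1) u y_carrier by (simp add: f.B.smult_r_distr)
    also have "\<dots> \<in> N"
      using t N'_sub y f.B.submoduleE(4,5)[OF N] by blast
    finally have "(t \<otimes>\<^bsub>R\<^esub> s) \<odot>\<^bsub>B\<^esub> x \<in> N" .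
    moreover have "t \<otimes>\<^bsub>R\<^esub> s \<in> carrier R - p"
      using primeideal.I_prime[OF p, of t s] t(1) s(1) by auto
    ultimately show False using x_out by blast
  qed
qed

lemma fin_gen_submodule_extension:
  assumes A: "module R A" and B: "module R B" and C: "module R C"
    and exact: "short_exact R A B C f g"
    and N': "fin_gen_submodule R A N'" and N'': "fin_gen_submodule R C N''"
  shows "\<exists>N. fin_gen_submodule R B N \<and> f ` N' \<subseteq> N \<and> N'' \<subseteq> g ` N"
proof -
  interpret f: module_map R A B f using short_exact_module_maps[OF A B C exact] by simp
  interpret g: module_map R B C g using short_exact_module_maps[OF A B C exact] by simp
  obtain S1 where S1: "finite S1" "S1 \<subseteq> carrier A" "N' = gen_submodule R A S1"
    using N' unfolding fin_gen_submodule_def by blast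
  obtain S2 where S2: "finite S2" "S2 \<subseteq> carrier C" "N'' = gen_submodule R C S2"
    using N'' unfolding fin_gen_submodule_def by blast
  obtain S0 where S0: "finite S0" "S0 \<subseteq> carrier B" "S2 = g ` S0"
    using finite_subset_image[OF S2(1)] S2(2) exact unfolding short_exact_def by metis
  define S where "S = f ` S1 \<union> S0"
  have S: "finite S" "S \<subseteq> carrier B" using S1 S0 unfolding S_def by auto
  have "f ` N' \<subseteq> gen_submodule R B S"
    using S1(2,3) f.gen_submodule_image f.B.gen_submodule_mono[OF _ S(2)] unfolding S_def by auto
  moreover have "N'' \<subseteq> g ` gen_submodule R B S"
    using S0 S2(3) g.gen_submodule_image f.B.gen_submodule_mono[OF _ S(2)] unfolding S_def
    by (metis Un_upper2 image_mono)
  ultimately show ?thesis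
    using S f.B.submodule_gen_submodule unfolding fin_gen_submodule_def by blast
qed

lemma in_dim_less_extension:
  assumes A: "module R A" and B: "module R B" and C: "module R C"
    and exact: "short_exact R A B C f g"
    and "in_dim_less R A n" "in_dim_less R C n"
  shows "in_dim_less R B n"
proof -
  interpret f: module_map R A B f using short_exact_module_maps[OF A B C exact] by simp
  interpret g: module_map R B C g using short_exact_module_maps[OF A B C exact] by simp
  obtain N' N'' where
    N': "fin_gen_submodule R A N'" "dim_primes R (quot_supp R A N') < real n" and
    N'': "fin_gen_submodule R C N''" "dim_primes R (quot_supp R C N'') < real n"
    using assms(5,6) unfolding f.A.in_dim_less_iff g.B.in_dim_less_iff by blast
  obtain N where N: "fin_gen_submodule R B N" "f ` N' \<subseteq> N" "N'' \<subseteq> g ` N"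
    using fin_gen_submodule_extension[OF A B C exact N'(1) N''(1)] by blast
  have "quot_supp R B N \<subseteq> quot_supp R A N' \<union> quot_supp R C N''"
    using quot_supp_extension_subset[OF A B C exact _ N(2,3)] N(1)
    unfolding fin_gen_submodule_def by blast
  then have "dim_primes R (quot_supp R B N)
      \<le> sup (dim_primes R (quot_supp R A N')) (dim_primes R (quot_supp R C N''))"
    by (metis dim_primes_Un dim_primes_mono)
  also have "\<dots> < real n" using N'(2) N''(2) by simp
  finally show ?thesis unfolding f.B.in_dim_less_iff using N(1) by blast
qed

theorem proposition2p12:
  fixes R :: "'a ring"
    and M' :: "('a, 'b) module" and M :: "('a, 'c) module" and M'' :: "('a, 'd) module"
    and f :: "'b \<Rightarrow> 'c" and g :: "'c \<Rightarrow> 'd" and n :: nat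
  assumes "cring R" and "noetherian_ring R"
    and "module R M'" and "module R M" and "module R M''"
    and "short_exact R M' M M'' f g"
  shows "in_dim_less R M n \<longleftrightarrow> in_dim_less R M' n \<and> in_dim_less R M'' n"
proof -
  interpret f: module_map R M' M f using short_exact_module_maps[OF assms(3-6)] by simp
  interpret g: module_map R M M'' g using short_exact_module_maps[OF assms(3-6)] by simp
  have "inj_on f (carrier M')" and "g ` carrier M = carrier M''"
    using assms(6) unfolding short_exact_def by auto
  then show ?thesis
    using f.in_dim_less_vimage[OF assms(2)] g.in_dim_less_image in_dim_less_extension[OF assms(3-6)]
    by blast
qed

end
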